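(* Let $p\in(0,1)$, let $X,\gamma$ satisfy the standing assumptions in the context, and let $0\le x_0<\mathbb E[\gamma X]$. Then the problem of minimizing $\mathrm{VaR}_p(g(X))$ over $g\in\mathcal G_{\rm ns}$ admits at least one solution, and $\mathrm{VaR}_p(X)>q$, where $q=\inf\{\mathrm{VaR}_p(g(X)):g\in\mathcal G_{\rm ns}\}$.
   Context: $(\Omega,\mathcal F,\mathbb P)$ is atomless. $\mathrm{VaR}_p(Y)=\inf\{x:\mathbb P(Y\le x)\ge p\}$. Standing assumptions: $X\ge0$ is a random variable whose distribution has a positive density on its support; $\gamma:\mathbb R\to\mathbb R$ is continuous and strictly positive; $\gamma$ also denotes $\gamma(X)$; $\mathbb E[\gamma]=1$, $\mathbb E[\gamma X]<\infty$. With $\mathcal G_1$ the measurable functions $\mathbb R\to\mathbb R$, $\mathcal G_{\rm ns}=\{g\in\mathcal G_1:\mathbb E[\gamma g(X)]\ge x_0,\ 0\le g(X)\le X\}$. *)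

theory Defs
  imports "HOL-Probability.Probability"
begin

definition atomless :: "'a measure \<Rightarrow> bool" where
  "atomless M \<longleftrightarrow> (\<forall>A\<in>sets M. measure M A > 0 \<longrightarrow>
      (\<exists>B\<in>sets M. B \<subseteq> A \<and> 0 < measure M B \<and> measure M B < measure M A))"

definition VaR :: "'a measure \<Rightarrow> real \<Rightarrow> ('a \<Rightarrow> real) \<Rightarrow> real" where
  "VaR M p Y = Inf {x::real. measure M {\<omega>\<in>space M. Y \<omega> \<le> x} \<ge> p}"

definition dist_support :: "'a measure \<Rightarrow> ('a \<Rightarrow> real) \<Rightarrow> real set" where
  "dist_support M X = {x. \<forall>e>0. measure M {\<omega>\<in>space M. X \<omega> \<in> ball x e} > 0}"

definition G_ns :: "'a measure \<Rightarrow> (real \<Rightarrow> real) \<Rightarrow> ('a \<Rightarrow> real) \<Rightarrow> real \<Rightarrow> (real \<Rightarrow> real) set" where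
  "G_ns M \<gamma> X x0 = {g. g \<in> borel_measurable borel \<and>
      integral\<^sup>L M (\<lambda>\<omega>. \<gamma> (X \<omega>) * g (X \<omega>)) \<ge> x0 \<and>
      (AE \<omega> in M. 0 \<le> g (X \<omega>) \<and> g (X \<omega>) \<le> X \<omega>)}"

end

(*
  Let q be the infimum and, for c \<ge> 0, let excess_c(x) = \<gamma>(x) (x - c)\<^sup>+. If g is admissible with
  VaR_p(g(X)) \<le> c, then g(X) \<le> X - (X - c)\<^sup>+ on B = {g(X) \<le> c}, so the event B has probability
  at least p and E[excess_c(X) 1_B] \<le> E[\<gamma> X] - x0. Conversely, truncating X at level c on an event
  {X \<in> D} of probability at least p with E[excess_c(X) 1_D(X)] \<le> E[\<gamma> X] - x0 is admissible and has
  VaR at most c. As X has no atoms, a Neyman-Pearson level set {X \<in> D} of probability p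
  minimises E[excess_q(X) 1_B] over events B of probability at least p; letting c decrease to q
  shows that it satisfies the bound for c = q, so the truncation at level q on D is optimal.
  Truncating X at level max 0 (VaR_p(X) - (E[\<gamma> X] - x0)) on {X \<le> VaR_p(X)} is admissible and
  has VaR strictly below VaR_p(X), which is positive because X has no atom at 0.
*)

theory Submission
  imports Defs
begin

definition quantile :: "real measure \<Rightarrow> real \<Rightarrow> real" where
  "quantile N p = Inf {x. p \<le> cdf N x}"

context finite_borel_measure
begin

lemma cdf_attains_value:
  assumes no_atoms: "\<And>x. measure M {x} = 0" and "0 < r" "r < measure M (space M)"
  shows "\<exists>s. cdf M s = r"
proof -
  obtain a where a: "cdf M a < r"
    using eventually_happens[OF order_tendstoD(2)[OF cdf_lim_at_bot \<open>0 < r\<close>]] by auto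
  obtain b where b: "r < cdf M b"
    using eventually_happens[OF order_tendstoD(1)[OF cdf_lim_at_top \<open>r < measure M (space M)\<close>]]
    by auto
  have "a \<le> b"
    using a b cdf_nondecreasing[of b a] by (cases "a \<le> b") auto
  moreover have "continuous_on {a..b} (cdf M)"
    using no_atoms by (intro continuous_at_imp_continuous_on) (simp add: isCont_cdf)
  ultimately show ?thesis
    using IVT'[of "cdf M" a r b] a b by auto
qed

end

context real_distribution
begin

lemma quantile_set_nonempty:
  assumes "p < 1" shows "{x. p \<le> cdf M x} \<noteq> {}"
  using eventually_happens[OF order_tendstoD(1)[OF cdf_lim_at_top_prob \<open>p < 1\<close>]]
  by (auto intro: less_imp_le)

lemma bdd_below_quantile_set:
  assumes "0 < p" shows "bdd_below {x. p \<le> cdf M x}"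
proof -
  obtain a where "cdf M a < p"
    using eventually_happens[OF order_tendstoD(2)[OF cdf_lim_at_bot \<open>0 < p\<close>]] by auto
  then have "a \<le> x" if "p \<le> cdf M x" for x
    using that cdf_nondecreasing[of x a] by (cases "a \<le> x") auto
  then show ?thesis by (intro bdd_belowI[of _ a]) auto
qed

lemma quantile_le:
  assumes "0 < p" "p \<le> cdf M c" shows "quantile M p \<le> c"
  unfolding quantile_def using assms bdd_below_quantile_set by (auto intro: cInf_lower)

lemma le_quantile:
  assumes "p < 1" "\<And>x. x < a \<Longrightarrow> cdf M x < p" shows "a \<le> quantile M p"
  unfolding quantile_def using assms quantile_set_nonempty
  by (intro cInf_greatest) (auto simp: not_less[symmetric])

lemma cdf_quantile:
  assumes "0 < p" "p < 1" shows "p \<le> cdf M (quantile M p)"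
proof (rule tendsto_lowerbound)
  show "(cdf M \<longlongrightarrow> cdf M (quantile M p)) (at_right (quantile M p))"
    using cdf_is_right_cont by (simp add: continuous_within)
  have "p \<le> cdf M x" if x: "quantile M p < x" for x
  proof -
    obtain y where "p \<le> cdf M y" "y < x"
      using x cInf_less_iff[OF quantile_set_nonempty[OF \<open>p < 1\<close>] bdd_below_quantile_set[OF \<open>0 < p\<close>]]
      unfolding quantile_def by auto
    then show ?thesis using cdf_nondecreasing[of y x] by simp
  qed
  then show "\<forall>\<^sub>F x in at_right (quantile M p). p \<le> cdf M x"
    by (auto simp: eventually_at_filter)
qed simp

lemma measure_lessThan_quantile:
  assumes "0 < p" shows "measure M {..<quantile M p} \<le> p"
proof (rule tendsto_upperbound)
  show "(cdf M \<longlongrightarrow> measure M {..<quantile M p}) (at_left (quantile M p))"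
    by (rule cdf_at_left)
  have "cdf M x \<le> p" if "x < quantile M p" for x
    using quantile_le[OF \<open>0 < p\<close>, of x] that by fastforce
  then show "\<forall>\<^sub>F x in at_left (quantile M p). cdf M x \<le> p"
    by (auto simp: eventually_at_filter)
qed simp

end

context prob_space
begin

lemma cdf_distr:
  "random_variable borel Y \<Longrightarrow> cdf (distr M borel Y) x = prob {\<omega>\<in>space M. Y \<omega> \<le> x}"
  by (simp add: cdf_def measure_distr vimage_def Int_def conj_commute)

lemma VaR_eq_quantile:
  "random_variable borel Y \<Longrightarrow> VaR M p Y = quantile (distr M borel Y) p"
  by (simp add: VaR_def quantile_def cdf_distr)

lemma VaR_le:
  assumes "random_variable borel Y" "0 < p" "p \<le> prob {\<omega>\<in>space M. Y \<omega> \<le> c}"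
  shows "VaR M p Y \<le> c"
  using real_distribution.quantile_le[OF real_distribution_distr[OF assms(1)]] assms
  by (simp add: VaR_eq_quantile cdf_distr)

lemma prob_le_VaR:
  assumes "random_variable borel Y" "0 < p" "p < 1"
  shows "p \<le> prob {\<omega>\<in>space M. Y \<omega> \<le> VaR M p Y}"
  using real_distribution.cdf_quantile[OF real_distribution_distr[OF assms(1)]] assms
  by (simp add: VaR_eq_quantile cdf_distr)

lemma prob_less_VaR:
  assumes "random_variable borel Y" "0 < p"
  shows "prob {\<omega>\<in>space M. Y \<omega> < VaR M p Y} \<le> p"
  using real_distribution.measure_lessThan_quantile[OF real_distribution_distr[OF assms(1)]] assms
  by (simp add: VaR_eq_quantile measure_distr vimage_def Int_def conj_commute)

lemma VaR_nonneg:
  assumes Y: "random_variable borel Y" and "AE \<omega> in M. 0 \<le> Y \<omega>" "0 < p" "p < 1"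
  shows "0 \<le> VaR M p Y"
proof -
  have "prob {\<omega>\<in>space M. Y \<omega> \<le> x} = 0" if "x < 0" for x
    using assms(2) that Y by (subst prob_eq_0) (auto elim!: eventually_mono)
  then show ?thesis
    using real_distribution.le_quantile[OF real_distribution_distr[OF Y]] assms
    by (simp add: VaR_eq_quantile cdf_distr)
qed

end

lemma distributed_measure_singleton:
  assumes "distributed M lborel X f"
  shows "measure M {\<omega>\<in>space M. X \<omega> = s} = 0"
proof -
  have "emeasure M (X -` {s} \<inter> space M) = (\<integral>\<^sup>+x. f x * indicator {s} x \<partial>lborel)"
    using distributed_emeasure[OF assms] by simp
  also have "\<dots> = 0"
    by (rule nn_integral_null_set) (simp add: null_sets_def)
  finally show ?thesis
    by (simp add: measure_def vimage_def Int_def conj_commute)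
qed

context prob_space
begin

lemma exists_Borel_subset_prob_eq:
  fixes X :: "'a \<Rightarrow> real"
  assumes [measurable]: "random_variable borel X" "E \<in> sets borel"
    and no_atoms: "\<And>s. prob {\<omega>\<in>space M. X \<omega> = s} = 0"
    and r: "0 \<le> r" "r \<le> prob {\<omega>\<in>space M. X \<omega> \<in> E}"
  shows "\<exists>E'\<in>sets borel. E' \<subseteq> E \<and> prob {\<omega>\<in>space M. X \<omega> \<in> E'} = r"
proof -
  consider "r = 0" | "r = prob {\<omega>\<in>space M. X \<omega> \<in> E}"
    | "0 < r" "r < prob {\<omega>\<in>space M. X \<omega> \<in> E}"
    using r by linarith
  then show ?thesis
  proof cases
    case 1
    then show ?thesis by (intro bexI[of _ "{}"]) auto
  next
    case 2
    then show ?thesis by (intro bexI[of _ E]) auto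
  next
    case 3
    interpret D: real_distribution "distr M borel X" by simp
    define N where "N = density (distr M borel X) (indicator E)"
    interpret N: finite_borel_measure N
      unfolding N_def by (auto intro!: D.finite_measure_restricted simp: finite_borel_measure_def
          finite_borel_measure_axioms_def)
    have measure_N: "measure N A = prob {\<omega>\<in>space M. X \<omega> \<in> E \<inter> A}" if "A \<in> sets borel" for A
      unfolding N_def using that
      by (simp add: measure_restricted measure_distr vimage_def Int_def conj_commute)
    have "measure N {x} = 0" for x
    proof -
      have "measure N {x} \<le> prob {\<omega>\<in>space M. X \<omega> = x}"
        by (auto simp: measure_N intro!: finite_measure_mono)
      then show ?thesis using no_atoms[of x] measure_nonneg[of N "{x}"] by linarith
    qed
    moreover have "measure N (space N) = prob {\<omega>\<in>space M. X \<omega> \<in> E}"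
      using measure_N[of UNIV] by (simp add: N_def)
    ultimately obtain s where "cdf N s = r"
      using N.cdf_attains_value 3 by metis
    then show ?thesis
      by (intro bexI[of _ "E \<inter> {..s}"]) (auto simp: cdf_def measure_N)
  qed
qed

lemma exists_level_set_prob_eq:
  fixes X :: "'a \<Rightarrow> real" and w :: "real \<Rightarrow> real"
  assumes [measurable]: "random_variable borel X" "w \<in> borel_measurable borel"
    and no_atoms: "\<And>s. prob {\<omega>\<in>space M. X \<omega> = s} = 0"
    and p: "0 < p" "p < 1"
  shows "\<exists>D\<in>sets borel. \<exists>k. prob {\<omega>\<in>space M. X \<omega> \<in> D} = p \<and>
           (\<forall>x\<in>D. w x \<le> k) \<and> (\<forall>x. x \<notin> D \<longrightarrow> k \<le> w x)"
proof -
  define k where "k = VaR M p (\<lambda>\<omega>. w (X \<omega>))"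
  let ?P = "\<lambda>A. prob {\<omega>\<in>space M. X \<omega> \<in> A}"
  have prob_Un: "?P (A \<union> B) = ?P A + ?P B" if "A \<in> sets borel" "B \<in> sets borel" "A \<inter> B = {}" for A B
    using that by (subst finite_measure_Union[symmetric]) (auto intro!: arg_cong[where f=prob])
  have below: "?P {x. w x < k} \<le> p"
    using prob_less_VaR[of "\<lambda>\<omega>. w (X \<omega>)"] p by (simp add: k_def)
  have "p \<le> ?P {x. w x \<le> k}"
    using prob_le_VaR[of "\<lambda>\<omega>. w (X \<omega>)"] p by (simp add: k_def)
  also have "{x. w x \<le> k} = {x. w x < k} \<union> {x. w x = k}" by auto
  finally have "p - ?P {x. w x < k} \<le> ?P {x. w x = k}"
    by (subst (asm) prob_Un) auto
  then obtain E where E: "E \<in> sets borel" "E \<subseteq> {x. w x = k}" "?P E = p - ?P {x. w x < k}"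
    using exists_Borel_subset_prob_eq[of X "{x. w x = k}" "p - ?P {x. w x < k}"] below no_atoms
    by auto
  have "?P ({x. w x < k} \<union> E) = p"
    using E by (subst prob_Un) auto
  then show ?thesis
    using E by (intro bexI[of _ "{x. w x < k} \<union> E"] exI[of _ k]) auto
qed

lemma Neyman_Pearson:
  fixes X :: "'a \<Rightarrow> real" and w :: "real \<Rightarrow> real"
  assumes [measurable]: "random_variable borel X" "w \<in> borel_measurable borel"
    and no_atoms: "\<And>s. prob {\<omega>\<in>space M. X \<omega> = s} = 0"
    and w_nonneg: "\<And>x. 0 \<le> w x" and w_int: "integrable M (\<lambda>\<omega>. w (X \<omega>))"
    and p: "0 < p" "p < 1"
  shows "\<exists>D\<in>sets borel. prob {\<omega>\<in>space M. X \<omega> \<in> D} = p \<and>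
           (\<forall>B\<in>events. p \<le> prob B \<longrightarrow>
              (\<integral>\<omega>. w (X \<omega>) * indicator D (X \<omega>) \<partial>M)
                \<le> (\<integral>\<omega>. w (X \<omega>) * indicator B \<omega> \<partial>M))"
proof -
  obtain D k where D[measurable]: "D \<in> sets borel" and prob_D: "prob {\<omega>\<in>space M. X \<omega> \<in> D} = p"
    and below: "\<forall>x\<in>D. w x \<le> k" and above: "\<forall>x. x \<notin> D \<longrightarrow> k \<le> w x"
    using exists_level_set_prob_eq[of X w] assms by blast
  define A where "A = {\<omega>\<in>space M. X \<omega> \<in> D}"
  have A[measurable]: "A \<in> events" by (simp add: A_def)
  have "D \<noteq> {}" using prob_D p by auto
  then have "0 \<le> k" using below w_nonneg by (meson all_not_in_conv order_trans)
  have "(\<integral>\<omega>. w (X \<omega>) * indicator A \<omega> \<partial>M) \<le> (\<integral>\<omega>. w (X \<omega>) * indicator B \<omega> \<partial>M)"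
    if B[measurable]: "B \<in> events" and "p \<le> prob B" for B
  proof -
    have int_wA: "integrable M (\<lambda>\<omega>. w (X \<omega>) * indicator A \<omega>)"
      and int_wB: "integrable M (\<lambda>\<omega>. w (X \<omega>) * indicator B \<omega>)"
      using w_int by (auto intro: integrable_real_mult_indicator)
    have int_A: "integrable M (indicator A :: 'a \<Rightarrow> real)"
      and int_B: "integrable M (indicator B :: 'a \<Rightarrow> real)"
      by (simp_all add: less_top[symmetric])
    have "0 \<le> k * (prob B - prob A)"
      using \<open>0 \<le> k\<close> \<open>p \<le> prob B\<close> prob_D by (simp add: A_def)
    also have "\<dots> = (\<integral>\<omega>. k * (indicator B \<omega> - indicator A \<omega>) \<partial>M)"
      using int_A int_B by simp
    also have "\<dots> \<le> (\<integral>\<omega>. w (X \<omega>) * indicator B \<omega> - w (X \<omega>) * indicator A \<omega> \<partial>M)"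
    proof (rule integral_mono)
      show "integrable M (\<lambda>\<omega>. k * (indicator B \<omega> - indicator A \<omega>))"
        using int_A int_B by simp
      show "integrable M (\<lambda>\<omega>. w (X \<omega>) * indicator B \<omega> - w (X \<omega>) * indicator A \<omega>)"
        using int_wA int_wB by simp
      show "k * (indicator B \<omega> - indicator A \<omega>) \<le> w (X \<omega>) * indicator B \<omega> - w (X \<omega>) * indicator A \<omega>"
        if "\<omega> \<in> space M" for \<omega>
        using that below above by (auto simp: A_def indicator_def)
    qed
    also have "\<dots> = (\<integral>\<omega>. w (X \<omega>) * indicator B \<omega> \<partial>M) - (\<integral>\<omega>. w (X \<omega>) * indicator A \<omega> \<partial>M)"
      using int_wA int_wB by simp
    finally show ?thesis by simp
  qed
  moreover have "(\<integral>\<omega>. w (X \<omega>) * indicator A \<omega> \<partial>M) = (\<integral>\<omega>. w (X \<omega>) * indicator D (X \<omega>) \<partial>M)"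
    by (rule Bochner_Integration.integral_cong) (auto simp: A_def indicator_def)
  ultimately show ?thesis
    using D prob_D by auto
qed

end

definition truncate_on :: "real set \<Rightarrow> real \<Rightarrow> real \<Rightarrow> real" where
  "truncate_on D c x = (if x \<in> D then min x c else x)"

lemma borel_measurable_truncate_on [measurable]:
  assumes [measurable]: "D \<in> sets borel"
  shows "truncate_on D c \<in> borel_measurable borel"
  unfolding truncate_on_def by measurable

lemma (in prob_space) VaR_truncate_on_le:
  assumes [measurable]: "random_variable borel X" "D \<in> sets borel"
    and "0 < p" "p \<le> prob {\<omega>\<in>space M. X \<omega> \<in> D}"
  shows "VaR M p (\<lambda>\<omega>. truncate_on D c (X \<omega>)) \<le> c"
proof (rule VaR_le)
  have "prob {\<omega>\<in>space M. X \<omega> \<in> D} \<le> prob {\<omega>\<in>space M. truncate_on D c (X \<omega>) \<le> c}"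
    by (rule finite_measure_mono) (auto simp: truncate_on_def)
  then show "p \<le> prob {\<omega>\<in>space M. truncate_on D c (X \<omega>) \<le> c}"
    using assms(4) by linarith
qed (use assms in auto)

lemma G_nsD:
  assumes "g \<in> G_ns M \<gamma> X x0"
  shows "g \<in> borel_measurable borel" "x0 \<le> (\<integral>\<omega>. \<gamma> (X \<omega>) * g (X \<omega>) \<partial>M)"
    and "AE \<omega> in M. 0 \<le> g (X \<omega>) \<and> g (X \<omega>) \<le> X \<omega>"
  using assms unfolding G_ns_def by auto

locale VaR_problem = prob_space M for M :: "'a measure" +
  fixes X :: "'a \<Rightarrow> real" and \<gamma> :: "real \<Rightarrow> real" and p x0 :: real
  assumes X_measurable [measurable]: "X \<in> borel_measurable M"
    and X_nonneg: "\<And>\<omega>. \<omega> \<in> space M \<Longrightarrow> 0 \<le> X \<omega>"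
    and X_no_atoms: "\<And>s. prob {\<omega>\<in>space M. X \<omega> = s} = 0"
    and \<gamma>_measurable [measurable]: "\<gamma> \<in> borel_measurable borel"
    and \<gamma>_nonneg: "\<And>x. 0 \<le> \<gamma> x"
    and integrable_\<gamma>: "integrable M (\<lambda>\<omega>. \<gamma> (X \<omega>))"
    and integral_\<gamma>: "(\<integral>\<omega>. \<gamma> (X \<omega>) \<partial>M) = 1"
    and integrable_\<gamma>X: "integrable M (\<lambda>\<omega>. \<gamma> (X \<omega>) * X \<omega>)"
    and p: "0 < p" "p < 1"
    and x0_less: "x0 < (\<integral>\<omega>. \<gamma> (X \<omega>) * X \<omega> \<partial>M)"
begin

abbreviation G where "G \<equiv> G_ns M \<gamma> X x0"

abbreviation VaR_of where "VaR_of g \<equiv> VaR M p (\<lambda>\<omega>. g (X \<omega>))"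

abbreviation E\<gamma>X where "E\<gamma>X \<equiv> (\<integral>\<omega>. \<gamma> (X \<omega>) * X \<omega> \<partial>M)"

abbreviation inf_VaR where "inf_VaR \<equiv> Inf (VaR_of ` G)"

definition excess :: "real \<Rightarrow> real \<Rightarrow> real" where
  "excess c x = \<gamma> x * max (x - c) 0"

lemma borel_measurable_excess [measurable]: "excess c \<in> borel_measurable borel"
  unfolding excess_def by measurable

lemma excess_nonneg: "0 \<le> excess c x"
  unfolding excess_def using \<gamma>_nonneg by simp

lemma integrable_dominated_by_\<gamma>X:
  assumes [measurable]: "h \<in> borel_measurable M"
    and "AE \<omega> in M. \<bar>h \<omega>\<bar> \<le> \<gamma> (X \<omega>) * X \<omega>"
  shows "integrable M h"
  using assms(2) by (intro Bochner_Integration.integrable_bound[OF integrable_\<gamma>X]) auto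

lemma integrable_excess:
  assumes "0 \<le> c" shows "integrable M (\<lambda>\<omega>. excess c (X \<omega>))"
proof (rule integrable_dominated_by_\<gamma>X)
  show "AE \<omega> in M. \<bar>excess c (X \<omega>)\<bar> \<le> \<gamma> (X \<omega>) * X \<omega>"
    using X_nonneg assms \<gamma>_nonneg
    by (intro AE_I2) (auto simp: excess_def abs_mult intro!: mult_left_mono)
qed simp

lemma integrable_G_ns:
  assumes "g \<in> G" shows "integrable M (\<lambda>\<omega>. \<gamma> (X \<omega>) * g (X \<omega>))"
proof (rule integrable_dominated_by_\<gamma>X)
  note G_nsD(1)[OF assms, measurable]
  show "(\<lambda>\<omega>. \<gamma> (X \<omega>) * g (X \<omega>)) \<in> borel_measurable M"
    by measurable
  show "AE \<omega> in M. \<bar>\<gamma> (X \<omega>) * g (X \<omega>)\<bar> \<le> \<gamma> (X \<omega>) * X \<omega>"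
    using G_nsD(3)[OF assms]
    by eventually_elim (auto simp: abs_mult \<gamma>_nonneg intro!: mult_left_mono)
qed

lemma integrable_excess_indicator:
  assumes [measurable]: "A \<in> sets borel" and "0 \<le> c"
  shows "integrable M (\<lambda>\<omega>. excess c (X \<omega>) * indicator A (X \<omega>))"
proof (rule integrable_dominated_by_\<gamma>X)
  show "AE \<omega> in M. \<bar>excess c (X \<omega>) * indicator A (X \<omega>)\<bar> \<le> \<gamma> (X \<omega>) * X \<omega>"
    using X_nonneg \<open>0 \<le> c\<close> \<gamma>_nonneg
    by (intro AE_I2) (auto simp: excess_def abs_mult indicator_def intro!: mult_left_mono)
qed simp

lemma excess_le_excess_add: "0 \<le> e \<Longrightarrow> excess c x \<le> excess (c + e) x + e * \<gamma> x"
  using mult_left_mono[of "max (x - c) 0" "max (x - (c + e)) 0 + e" "\<gamma> x"] \<gamma>_nonneg[of x]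
  by (simp add: excess_def algebra_simps)

lemma G_ns_excess_bound:
  assumes g: "g \<in> G" and "0 \<le> c"
  shows "(\<integral>\<omega>. excess c (X \<omega>) * indicator {\<omega>\<in>space M. g (X \<omega>) \<le> c} \<omega> \<partial>M) \<le> E\<gamma>X - x0"
proof -
  define B where "B = {\<omega>\<in>space M. g (X \<omega>) \<le> c}"
  note G_nsD(1)[OF g, measurable]
  have int_B: "integrable M (\<lambda>\<omega>. excess c (X \<omega>) * indicator B \<omega>)"
    using integrable_excess[OF \<open>0 \<le> c\<close>] by (rule integrable_real_mult_indicator[rotated]) (simp add: B_def)
  have "x0 \<le> (\<integral>\<omega>. \<gamma> (X \<omega>) * g (X \<omega>) \<partial>M)"
    by (rule G_nsD(2)[OF g])
  also have "\<dots> \<le> (\<integral>\<omega>. \<gamma> (X \<omega>) * X \<omega> - excess c (X \<omega>) * indicator B \<omega> \<partial>M)"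
  proof (rule integral_mono_AE)
    show "AE \<omega> in M. \<gamma> (X \<omega>) * g (X \<omega>) \<le> \<gamma> (X \<omega>) * X \<omega> - excess c (X \<omega>) * indicator B \<omega>"
      using G_nsD(3)[OF g]
    proof eventually_elim
      case (elim \<omega>)
      then have "g (X \<omega>) \<le> X \<omega> - max (X \<omega> - c) 0 * indicator B \<omega>"
        by (auto simp: B_def indicator_def)
      then have "\<gamma> (X \<omega>) * g (X \<omega>) \<le> \<gamma> (X \<omega>) * (X \<omega> - max (X \<omega> - c) 0 * indicator B \<omega>)"
        using \<gamma>_nonneg by (rule mult_left_mono)
      then show ?case by (simp add: excess_def algebra_simps)
    qed
  qed (use integrable_G_ns[OF g] integrable_\<gamma>X int_B in simp_all)
  also have "\<dots> = E\<gamma>X - (\<integral>\<omega>. excess c (X \<omega>) * indicator B \<omega> \<partial>M)"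
    using integrable_\<gamma>X int_B by simp
  finally show ?thesis by (simp add: B_def)
qed

lemma truncate_on_in_G_ns:
  assumes [measurable]: "D \<in> sets borel" and "0 \<le> c"
    and bound: "(\<integral>\<omega>. excess c (X \<omega>) * indicator D (X \<omega>) \<partial>M) \<le> E\<gamma>X - x0"
  shows "truncate_on D c \<in> G"
proof -
  have "\<gamma> x * truncate_on D c x = \<gamma> x * x - excess c x * indicator D x" for x
    by (simp add: truncate_on_def excess_def indicator_def min_def max_def algebra_simps)
  then have "(\<integral>\<omega>. \<gamma> (X \<omega>) * truncate_on D c (X \<omega>) \<partial>M)
      = E\<gamma>X - (\<integral>\<omega>. excess c (X \<omega>) * indicator D (X \<omega>) \<partial>M)"
    using integrable_\<gamma>X integrable_excess_indicator[OF assms(1,2)] by simp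
  then show ?thesis
    using bound X_nonneg \<open>0 \<le> c\<close>
    unfolding G_ns_def by (auto simp: truncate_on_def intro!: AE_I2)
qed

lemma id_in_G_ns: "(\<lambda>x. x) \<in> G"
  using x0_less X_nonneg unfolding G_ns_def by auto

lemma VaR_of_nonneg:
  assumes "g \<in> G" shows "0 \<le> VaR_of g"
proof -
  note G_nsD(1)[OF assms, measurable]
  show ?thesis
    using G_nsD(3)[OF assms] p by (intro VaR_nonneg) (auto elim!: eventually_mono)
qed

lemma bdd_below_VaR_of: "bdd_below (VaR_of ` G)"
  using VaR_of_nonneg by (intro bdd_belowI[of _ 0]) auto

lemma inf_VaR_le: "g \<in> G \<Longrightarrow> inf_VaR \<le> VaR_of g"
  using bdd_below_VaR_of by (auto intro: cInf_lower)

lemma exists_VaR_of_less: "inf_VaR < c \<Longrightarrow> \<exists>g\<in>G. VaR_of g < c"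
  using cInf_less_iff[OF _ bdd_below_VaR_of] id_in_G_ns by auto

lemma inf_VaR_nonneg: "0 \<le> inf_VaR"
  using id_in_G_ns VaR_of_nonneg by (intro cInf_greatest) auto

lemma exists_optimal_truncation_set:
  "\<exists>D\<in>sets borel. prob {\<omega>\<in>space M. X \<omega> \<in> D} = p \<and>
     (\<integral>\<omega>. excess inf_VaR (X \<omega>) * indicator D (X \<omega>) \<partial>M) \<le> E\<gamma>X - x0"
proof -
  let ?q = inf_VaR
  obtain D where D: "D \<in> sets borel" "prob {\<omega>\<in>space M. X \<omega> \<in> D} = p"
    and optimal: "\<forall>B\<in>events. p \<le> prob B \<longrightarrow>
      (\<integral>\<omega>. excess ?q (X \<omega>) * indicator D (X \<omega>) \<partial>M) \<le> (\<integral>\<omega>. excess ?q (X \<omega>) * indicator B \<omega> \<partial>M)"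
    using Neyman_Pearson[OF X_measurable borel_measurable_excess X_no_atoms excess_nonneg
        integrable_excess[OF inf_VaR_nonneg] p]
    by blast
  have "(\<integral>\<omega>. excess ?q (X \<omega>) * indicator D (X \<omega>) \<partial>M) \<le> E\<gamma>X - x0 + e" if "0 < e" for e
  proof -
    obtain g where g: "g \<in> G" and "VaR_of g < ?q + e"
      using exists_VaR_of_less[of "?q + e"] \<open>0 < e\<close> by auto
    note G_nsD(1)[OF g, measurable]
    define B where "B = {\<omega>\<in>space M. g (X \<omega>) \<le> ?q + e}"
    have B [measurable]: "B \<in> events" by (simp add: B_def)
    have int_B: "integrable M (\<lambda>\<omega>. excess c (X \<omega>) * indicator B \<omega>)" if "0 \<le> c" for c
      using integrable_excess[OF that] B by (rule integrable_real_mult_indicator[rotated])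
    have excess_B: "excess ?q (X \<omega>) * indicator B \<omega>
        \<le> excess (?q + e) (X \<omega>) * indicator B \<omega> + e * \<gamma> (X \<omega>)" for \<omega>
      using excess_le_excess_add[of e ?q "X \<omega>"] \<gamma>_nonneg[of "X \<omega>"] \<open>0 < e\<close>
      by (cases "\<omega> \<in> B") simp_all
    have "p \<le> prob {\<omega>\<in>space M. g (X \<omega>) \<le> VaR_of g}"
      using p by (intro prob_le_VaR) auto
    also have "\<dots> \<le> prob B"
      using \<open>VaR_of g < ?q + e\<close> by (intro finite_measure_mono) (auto simp: B_def)
    finally have "(\<integral>\<omega>. excess ?q (X \<omega>) * indicator D (X \<omega>) \<partial>M)
        \<le> (\<integral>\<omega>. excess ?q (X \<omega>) * indicator B \<omega> \<partial>M)"
      by (rule optimal[rule_format, OF B])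
    also have "\<dots> \<le> (\<integral>\<omega>. excess (?q + e) (X \<omega>) * indicator B \<omega> + e * \<gamma> (X \<omega>) \<partial>M)"
      using excess_B int_B inf_VaR_nonneg \<open>0 < e\<close> integrable_\<gamma> by (intro integral_mono) simp_all
    also have "\<dots> = (\<integral>\<omega>. excess (?q + e) (X \<omega>) * indicator B \<omega> \<partial>M) + e"
      using int_B[of "?q + e"] inf_VaR_nonneg \<open>0 < e\<close> integrable_\<gamma> integral_\<gamma> by simp
    also have "\<dots> \<le> E\<gamma>X - x0 + e"
      using G_ns_excess_bound[OF g, of "?q + e"] inf_VaR_nonneg \<open>0 < e\<close> by (simp add: B_def)
    finally show ?thesis .
  qed
  then have "(\<integral>\<omega>. excess ?q (X \<omega>) * indicator D (X \<omega>) \<partial>M) \<le> E\<gamma>X - x0"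
    by (rule field_le_epsilon)
  with D show ?thesis by blast
qed

lemma VaR_problem_has_minimizer: "\<exists>g\<in>G. \<forall>h\<in>G. VaR_of g \<le> VaR_of h"
proof -
  obtain D where D [measurable]: "D \<in> sets borel" and "prob {\<omega>\<in>space M. X \<omega> \<in> D} = p"
    and "(\<integral>\<omega>. excess inf_VaR (X \<omega>) * indicator D (X \<omega>) \<partial>M) \<le> E\<gamma>X - x0"
    using exists_optimal_truncation_set by blast
  then have "truncate_on D inf_VaR \<in> G" and "VaR_of (truncate_on D inf_VaR) \<le> inf_VaR"
    using inf_VaR_nonneg p by (auto intro: truncate_on_in_G_ns VaR_truncate_on_le)
  then show ?thesis
    using inf_VaR_le order_trans by blast
qed

lemma inf_VaR_less_VaR: "inf_VaR < VaR M p X"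
proof -
  define t where "t = VaR M p X"
  define \<delta> where "\<delta> = E\<gamma>X - x0"
  define c where "c = max 0 (t - \<delta>)"
  have prob_t: "p \<le> prob {\<omega>\<in>space M. X \<omega> \<le> t}"
    unfolding t_def using p by (intro prob_le_VaR) auto
  have "0 < t"
  proof (rule ccontr)
    assume "\<not> 0 < t"
    then have "prob {\<omega>\<in>space M. X \<omega> \<le> t} \<le> prob {\<omega>\<in>space M. X \<omega> = 0}"
      using X_nonneg by (intro finite_measure_mono) force+
    then show False using prob_t X_no_atoms[of 0] p by simp
  qed
  moreover have "0 < \<delta>" using x0_less by (simp add: \<delta>_def)
  ultimately have "0 \<le> c" "c < t" by (auto simp: c_def)
  have "(\<integral>\<omega>. excess c (X \<omega>) * indicator {..t} (X \<omega>) \<partial>M) \<le> (\<integral>\<omega>. \<delta> * \<gamma> (X \<omega>) \<partial>M)"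
  proof (rule integral_mono)
    show "excess c (X \<omega>) * indicator {..t} (X \<omega>) \<le> \<delta> * \<gamma> (X \<omega>)" for \<omega>
    proof (cases "X \<omega> \<le> t")
      case True
      then have "max (X \<omega> - c) 0 \<le> \<delta>" using \<open>0 < \<delta>\<close> by (simp add: c_def)
      then have "\<gamma> (X \<omega>) * max (X \<omega> - c) 0 \<le> \<gamma> (X \<omega>) * \<delta>"
        by (rule mult_left_mono) (rule \<gamma>_nonneg)
      then show ?thesis
        using True by (simp add: excess_def mult.commute)
    qed (use \<open>0 < \<delta>\<close> \<gamma>_nonneg in simp)
  qed (use integrable_excess_indicator[OF _ \<open>0 \<le> c\<close>] integrable_\<gamma> in simp_all)
  then have "truncate_on {..t} c \<in> G"
    using integral_\<gamma> \<open>0 \<le> c\<close> by (intro truncate_on_in_G_ns) (simp_all add: \<delta>_def)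
  moreover have "VaR_of (truncate_on {..t} c) \<le> c"
    using prob_t p by (intro VaR_truncate_on_le) auto
  ultimately have "inf_VaR \<le> c"
    using inf_VaR_le order_trans by blast
  with \<open>c < t\<close> show ?thesis by (simp add: t_def)
qed

end

theorem lemma1:
  fixes M :: "'a measure" and X :: "'a \<Rightarrow> real" and \<gamma> :: "real \<Rightarrow> real"
    and f :: "real \<Rightarrow> ennreal" and p x0 :: real
  assumes "prob_space M" and "atomless M"
    and "p \<in> {0<..<1}"
    and "X \<in> borel_measurable M" and "\<forall>\<omega>\<in>space M. X \<omega> \<ge> 0"
    and "distributed M lborel X f" and "\<forall>x\<in>dist_support M X. f x > 0"
    and "continuous_on UNIV \<gamma>" and "\<forall>x. \<gamma> x > 0"
    and "integrable M (\<lambda>\<omega>. \<gamma> (X \<omega>))" and "integral\<^sup>L M (\<lambda>\<omega>. \<gamma> (X \<omega>)) = 1"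
    and "integrable M (\<lambda>\<omega>. \<gamma> (X \<omega>) * X \<omega>)"
    and "0 \<le> x0" and "x0 < integral\<^sup>L M (\<lambda>\<omega>. \<gamma> (X \<omega>) * X \<omega>)"
  shows "(\<exists>g\<in>G_ns M \<gamma> X x0. \<forall>h\<in>G_ns M \<gamma> X x0.
            VaR M p (\<lambda>\<omega>. g (X \<omega>)) \<le> VaR M p (\<lambda>\<omega>. h (X \<omega>)))
       \<and> VaR M p X > Inf ((\<lambda>g. VaR M p (\<lambda>\<omega>. g (X \<omega>))) ` G_ns M \<gamma> X x0)"
proof -
  have "VaR_problem M X \<gamma> p x0"
    using assms distributed_measure_singleton[OF assms(6)] borel_measurable_continuous_onI[OF assms(8)]
    by (auto simp: VaR_problem_def VaR_problem_axioms_def less_imp_le)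
  then interpret VaR_problem M X \<gamma> p x0 .
  show ?thesis
    using VaR_problem_has_minimizer inf_VaR_less_VaR by blast
qed

end
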